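(* Let $C\subseteq\{0,1\}^n$ with $|C|=2^{Rn}$, let $\Pi=\{A_i\}_{i\in\{0,1\}^{R'n}}$ be a partition of $C$ into $2^{R'n}$ sets of size $2^{\ell}$ with $R'n=Rn-\ell$, and let $C_\Pi$ be the stochastic code that encodes message $i$ as a uniformly random element of $A_i$. Let $L\ge1$. If for every view $V\in\{0,1,?\}^n$ with exactly $\rho_r n$ non-$?$ coordinates and every message index $i$, \[\#\{x\in A_i : x\text{ is consistent with }V\}<L,\] then the equivocation of $C_\Pi$ satisfies $\Delta\ge Rn-\rho_r n-\log_2 L$.
   Context: A codeword $x$ is consistent with a view $V=(v_1,\dots,v_n)\in\{0,1,?\}^n$ if $x_i=v_i$ whenever $v_i\ne ?$. With $\mathbf S$ the uniformly random message, $\mathbf X$ its (random) encoding, and for $\mathscr S\subseteq[n]$ of size $\rho_r n$, $\mathbf V(\mathscr S)$ the string equal to $\mathbf X$ on $\mathscr S$ and $?$ elsewhere, the equivocation is $\Delta=\min_{|\mathscr S|=\rho_r n}H(\mathbf S\mid\mathbf V(\mathscr S))$. *)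

theory Defs
  imports "HOL-Probability.Probability"
begin

text \<open>Codewords are bit strings of length n, represented as bool lists.
  Views are strings over {0,1,?}, represented as bool option lists
  (None stands for the erasure symbol ?).\<close>

definition consistent :: "bool list \<Rightarrow> bool option list \<Rightarrow> bool" where
  "consistent x V \<longleftrightarrow> length x = length V \<and>
     (\<forall>i < length V. V ! i \<noteq> None \<longrightarrow> x ! i = the (V ! i))"

definition revealed :: "bool option list \<Rightarrow> nat" where
  "revealed V = card {i. i < length V \<and> V ! i \<noteq> None}"

definition view :: "bool list \<Rightarrow> nat set \<Rightarrow> bool option list" where
  "view x S = map (\<lambda>i. if i \<in> S then Some (x ! i) else None) [0..<length x]"

definition joint_msg_view ::
  "'i set \<Rightarrow> ('i \<Rightarrow> bool list set) \<Rightarrow> nat set \<Rightarrow> ('i \<times> bool option list) pmf" where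
  "joint_msg_view I A S =
     do { i \<leftarrow> pmf_of_set I; x \<leftarrow> pmf_of_set (A i); return_pmf (i, view x S) }"

definition cond_entropy :: "('a \<times> 'b) pmf \<Rightarrow> real" where
  "cond_entropy p =
     - (\<Sum>z \<in> set_pmf p. pmf p z * log 2 (pmf p z / pmf (map_pmf snd p) (snd z)))"

definition equivocation ::
  "nat \<Rightarrow> nat \<Rightarrow> 'i set \<Rightarrow> ('i \<Rightarrow> bool list set) \<Rightarrow> real" where
  "equivocation n k I A =
     Min {cond_entropy (joint_msg_view I A S) | S. S \<subseteq> {..<n} \<and> card S = k}"

end

theory Submission
  imports Defs
begin

text \<open>Given the message and the view, the codeword is one of fewer than \<open>L\<close> codewords of
  the message's class consistent with the view. Hence every atom of the joint law of
  (message, view) has mass below \<open>L / 2^(Rn)\<close>, so \<open>H(S, V) \<ge> Rn - log L\<close>. The view takes at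
  most \<open>2^(\<rho>\<^sub>r n)\<close> values, so \<open>H(V) \<le> \<rho>\<^sub>r n\<close>, and \<open>H(S | V) = H(S, V) - H(V)\<close>.\<close>

definition pmf_entropy :: "'a pmf \<Rightarrow> real" where
  "pmf_entropy p = - (\<Sum>z \<in> set_pmf p. pmf p z * log 2 (pmf p z))"

lemma pmf_entropy_le_log_card:
  assumes fin: "finite (set_pmf p)"
  shows "pmf_entropy p \<le> log 2 (card (set_pmf p))"
proof -
  define Q where "Q = set_pmf p"
  define m where "m = real (card Q)"
  have "Q \<noteq> {}" by (simp add: Q_def set_pmf_not_empty)
  hence m: "m > 0" using fin by (simp add: m_def Q_def card_gt_0_iff)
  have pos: "pmf p v > 0" if "v \<in> Q" for v using that by (simp add: Q_def pmf_positive)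
  have sum1: "(\<Sum>v\<in>Q. pmf p v) = 1" using fin by (simp add: Q_def sum_pmf_eq_1)
  have "pmf p v * ln (1 / (m * pmf p v)) \<le> 1 / m - pmf p v" if v: "v \<in> Q" for v
  proof -
    have "ln (1 / (m * pmf p v)) \<le> 1 / (m * pmf p v) - 1"
      using m pos[OF v] by (intro ln_le_minus_one) simp
    hence "pmf p v * ln (1 / (m * pmf p v)) \<le> pmf p v * (1 / (m * pmf p v) - 1)"
      using pos[OF v] by (intro mult_left_mono) simp_all
    also have "\<dots> = 1 / m - pmf p v" using m pos[OF v] by (simp add: field_simps)
    finally show ?thesis .
  qed
  hence "(\<Sum>v\<in>Q. pmf p v * ln (1 / (m * pmf p v))) \<le> (\<Sum>v\<in>Q. 1 / m - pmf p v)"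
    by (rule sum_mono)
  also have "\<dots> = 0" using sum1 m by (simp add: sum_subtractf m_def)
  moreover have "(\<Sum>v\<in>Q. pmf p v * ln (1 / (m * pmf p v)))
      = (\<Sum>v\<in>Q. - pmf p v * ln m - pmf p v * ln (pmf p v))"
    using m pos by (intro sum.cong) (simp_all add: ln_div ln_mult algebra_simps)
  ultimately have "- (\<Sum>v\<in>Q. pmf p v * ln (pmf p v)) \<le> ln m"
    using sum1 by (simp add: sum_subtractf sum_negf sum_distrib_right[symmetric])
  from divide_right_mono[OF this, of "ln 2"]
  have "- (\<Sum>v\<in>Q. pmf p v * ln (pmf p v)) / ln 2 \<le> ln m / ln 2" by simp
  thus ?thesis
    by (simp add: pmf_entropy_def log_def Q_def m_def sum_divide_distrib[symmetric])
qed

lemma pmf_entropy_ge_of_pmf_le: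
  assumes fin: "finite (set_pmf p)" and le: "\<And>z. pmf p z \<le> M"
  shows "- log 2 M \<le> pmf_entropy p"
proof -
  have "pmf p z * log 2 (pmf p z) \<le> pmf p z * log 2 M" if "z \<in> set_pmf p" for z
  proof -
    have "pmf p z > 0" using that by (simp add: pmf_positive)
    thus ?thesis using le[of z] by (intro mult_left_mono) auto
  qed
  hence "(\<Sum>z\<in>set_pmf p. pmf p z * log 2 (pmf p z)) \<le> (\<Sum>z\<in>set_pmf p. pmf p z) * log 2 M"
    by (simp add: sum_distrib_right sum_mono)
  thus ?thesis using fin by (simp add: pmf_entropy_def sum_pmf_eq_1)
qed

lemma cond_entropy_eq_entropy_diff:
  fixes p :: "('a \<times> 'b) pmf"
  assumes fin: "finite (set_pmf p)"
  shows "cond_entropy p = pmf_entropy p - pmf_entropy (map_pmf snd p)"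
proof -
  define q where "q = map_pmf snd p"
  have fin_q: "finite (set_pmf q)" using fin by (simp add: q_def)
  have "log 2 (pmf p z / pmf q (snd z)) = log 2 (pmf p z) - log 2 (pmf q (snd z))"
    if "z \<in> set_pmf p" for z
  proof -
    have "snd z \<in> set_pmf q" using that by (simp add: q_def)
    thus ?thesis using that by (simp add: log_divide pmf_positive set_pmf_iff)
  qed
  hence "cond_entropy p = pmf_entropy p + (\<Sum>z\<in>set_pmf p. pmf p z * log 2 (pmf q (snd z)))"
    by (simp add: cond_entropy_def pmf_entropy_def q_def[symmetric] right_diff_distrib
        sum_subtractf)
  also have "(\<Sum>z\<in>set_pmf p. pmf p z * log 2 (pmf q (snd z)))
      = measure_pmf.expectation p (\<lambda>z. log 2 (pmf q (snd z)))"
    using fin by (subst integral_measure_pmf[of "set_pmf p"]) auto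
  also have "\<dots> = measure_pmf.expectation q (\<lambda>v. log 2 (pmf q v))"
    by (simp add: q_def)
  also have "\<dots> = - pmf_entropy q"
    using fin_q by (subst integral_measure_pmf[of "set_pmf q"]) (auto simp: pmf_entropy_def)
  finally show ?thesis by (simp add: q_def)
qed

lemma length_view [simp]: "length (view x S) = length x"
  by (simp add: view_def)

lemma consistent_view: "consistent x (view x S)"
  by (simp add: consistent_def view_def)

lemma revealed_view:
  assumes "S \<subseteq> {..<length x}"
  shows "revealed (view x S) = card S"
proof -
  have "{i. i < length (view x S) \<and> view x S ! i \<noteq> None} = S"
    using assms by (auto simp: view_def split: if_splits)
  thus ?thesis by (simp add: revealed_def)
qed

lemma card_view_image_le:
  assumes S: "S \<subseteq> {..<n}" and len: "\<forall>x\<in>X. length x = n"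
  shows "card ((\<lambda>x. view x S) ` X) \<le> 2 ^ card S"
proof -
  define h :: "(nat \<Rightarrow> bool) \<Rightarrow> bool option list"
    where "h f = map (\<lambda>i. if i \<in> S then Some (f i) else None) [0..<n]" for f
  have fin: "finite S" using S finite_subset by blast
  have "(\<lambda>x. view x S) ` X \<subseteq> h ` (S \<rightarrow>\<^sub>E (UNIV :: bool set))"
  proof
    fix v assume "v \<in> (\<lambda>x. view x S) ` X"
    then obtain x where "x \<in> X" "v = view x S" by auto
    hence "v = h (restrict ((!) x) S)" using len by (auto simp: h_def view_def)
    thus "v \<in> h ` (S \<rightarrow>\<^sub>E UNIV)" by auto
  qed
  hence "card ((\<lambda>x. view x S) ` X) \<le> card (h ` (S \<rightarrow>\<^sub>E (UNIV :: bool set)))"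
    using fin by (intro card_mono) (auto simp: finite_PiE)
  also have "\<dots> \<le> card (S \<rightarrow>\<^sub>E (UNIV :: bool set))"
    using fin by (intro card_image_le) (auto simp: finite_PiE)
  also have "\<dots> = 2 ^ card S" using fin by (simp add: card_PiE)
  finally show ?thesis .
qed

lemma pmf_map_Pair: "pmf (map_pmf (Pair i) P) (a, b) = (if i = a then pmf P b else 0)"
proof -
  have "Pair i -` {(a, b)} = (if i = a then {b} else {})" by auto
  thus ?thesis by (simp add: pmf_map measure_pmf_single)
qed

lemma Sigma_not_empty_of_card_pos:
  assumes "I \<noteq> {}" "\<forall>i\<in>I. card (A i) = c" "c > 0"
  shows "Sigma I A \<noteq> {}"
proof -
  obtain i where "i \<in> I" using assms(1) by blast
  hence "A i \<noteq> {}" using assms(2,3) by auto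
  with \<open>i \<in> I\<close> show ?thesis by auto
qed

lemma bind_pmf_of_set_Pair_eq_pmf_of_set_Sigma:
  assumes fin_I: "finite I" and ne_I: "I \<noteq> {}"
    and fin_A: "\<forall>i\<in>I. finite (A i)" and card_A: "\<forall>i\<in>I. card (A i) = c" and c: "c > 0"
  shows "pmf_of_set I \<bind> (\<lambda>i. map_pmf (Pair i) (pmf_of_set (A i))) = pmf_of_set (Sigma I A)"
proof (rule pmf_eqI)
  fix z :: "'a \<times> 'b"
  obtain a b where z: "z = (a, b)" by (cases z)
  have ne_A: "i \<in> I \<Longrightarrow> A i \<noteq> {}" for i using card_A c by fastforce
  have fin_Sigma: "finite (Sigma I A)" using fin_I fin_A by auto
  have ne_Sigma: "Sigma I A \<noteq> {}" using ne_I card_A c by (rule Sigma_not_empty_of_card_pos)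
  have card_Sigma: "card (Sigma I A) = card I * c" using fin_I fin_A card_A by (simp add: card_SigmaI)
  have "(\<Sum>i\<in>I. pmf (map_pmf (Pair i) (pmf_of_set (A i))) (a, b))
      = (if a \<in> I then pmf (pmf_of_set (A a)) b else 0)"
    using fin_I by (simp add: pmf_map_Pair sum.delta')
  also have "\<dots> = indicator (Sigma I A) (a, b) / c"
    using ne_A fin_A card_A by (auto simp: indicator_def)
  finally show "pmf (pmf_of_set I \<bind> (\<lambda>i. map_pmf (Pair i) (pmf_of_set (A i)))) z
      = pmf (pmf_of_set (Sigma I A)) z"
    using z fin_I ne_I fin_Sigma ne_Sigma card_Sigma
    by (simp add: pmf_bind_pmf_of_set field_simps)
qed

text \<open>Choosing a message and then a uniform codeword of its class amounts to choosing a
  uniform pair from \<open>Sigma I A\<close>, because all classes have the same size.\<close>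
lemma joint_msg_view_eq_map_pmf_of_set_Sigma:
  assumes "finite I" "I \<noteq> {}" "\<forall>i\<in>I. finite (A i)" "\<forall>i\<in>I. card (A i) = c" "c > 0"
  shows "joint_msg_view I A S = map_pmf (\<lambda>(i, x). (i, view x S)) (pmf_of_set (Sigma I A))"
proof -
  have "joint_msg_view I A S
      = map_pmf (\<lambda>(i, x). (i, view x S))
          (pmf_of_set I \<bind> (\<lambda>i. map_pmf (Pair i) (pmf_of_set (A i))))"
    unfolding joint_msg_view_def
    by (simp add: map_pmf_def bind_assoc_pmf bind_return_pmf)
  thus ?thesis
    using bind_pmf_of_set_Pair_eq_pmf_of_set_Sigma[OF assms] by simp
qed

lemma pmf_joint_msg_view_le:
  fixes L :: real
  assumes fin_I: "finite I" and ne_I: "I \<noteq> {}" and fin_A: "\<forall>i\<in>I. finite (A i)"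
    and card_A: "\<forall>i\<in>I. card (A i) = c" and c: "c > 0"
    and list_dec: "\<forall>i\<in>I. \<forall>x\<in>A i. card {y \<in> A i. consistent y (view x S)} \<le> L"
    and L: "L \<ge> 0"
  shows "pmf (joint_msg_view I A S) (a, v) \<le> L / card (Sigma I A)"
proof -
  define g where "g = (\<lambda>(i :: 'a, x). (i, view x S))"
  define F where "F = Sigma I A \<inter> g -` {(a, v)}"
  have "card F \<le> L"
  proof (cases "F = {}")
    case False
    then obtain x0 where x0: "a \<in> I" "x0 \<in> A a" "view x0 S = v"
      by (auto simp: F_def g_def)
    have "F \<subseteq> Pair a ` {y \<in> A a. consistent y v}"
      by (auto simp: F_def g_def consistent_view)
    hence "card F \<le> card (Pair a ` {y \<in> A a. consistent y v})"
      using fin_A x0 by (intro card_mono) auto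
    also have "\<dots> \<le> card {y \<in> A a. consistent y v}"
      by (rule card_image_le) (use fin_A x0 in auto)
    finally show ?thesis using list_dec x0 by force
  qed (use L in simp)
  moreover have "Sigma I A \<noteq> {}"
    using ne_I card_A c by (rule Sigma_not_empty_of_card_pos)
  moreover have "finite (Sigma I A)" using fin_I fin_A by auto
  ultimately have "pmf (joint_msg_view I A S) (a, v) = card F / card (Sigma I A)"
    using joint_msg_view_eq_map_pmf_of_set_Sigma[OF fin_I ne_I fin_A card_A c, of S]
    by (simp add: pmf_map measure_pmf_of_set g_def F_def del: card_SigmaI)
  thus ?thesis using \<open>card F \<le> L\<close> by (simp add: divide_right_mono)
qed

lemma cond_entropy_joint_msg_view_ge:
  fixes L :: real
  assumes S: "S \<subseteq> {..<n}"
    and fin_I: "finite I" and ne_I: "I \<noteq> {}" and fin_A: "\<forall>i\<in>I. finite (A i)"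
    and card_A: "\<forall>i\<in>I. card (A i) = c" and c: "c > 0"
    and len: "\<forall>i\<in>I. \<forall>x\<in>A i. length x = n"
    and list_dec: "\<forall>i\<in>I. \<forall>x\<in>A i. card {y \<in> A i. consistent y (view x S)} \<le> L"
    and L: "L > 0"
  shows "log 2 (card (Sigma I A)) - card S - log 2 L \<le> cond_entropy (joint_msg_view I A S)"
proof -
  define p where "p = joint_msg_view I A S"
  have p: "p = map_pmf (\<lambda>(i, x). (i, view x S)) (pmf_of_set (Sigma I A))"
    unfolding p_def by (rule joint_msg_view_eq_map_pmf_of_set_Sigma[OF fin_I ne_I fin_A card_A c])
  have fin_Sigma: "finite (Sigma I A)" using fin_I fin_A by auto
  have ne_Sigma: "Sigma I A \<noteq> {}"
    using ne_I card_A c by (rule Sigma_not_empty_of_card_pos)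
  hence fin_p: "finite (set_pmf p)" using fin_Sigma by (simp add: p)
  have views: "set_pmf (map_pmf snd p) = (\<lambda>x. view x S) ` snd ` Sigma I A"
    using fin_Sigma ne_Sigma by (simp add: p image_image case_prod_beta)
  have "card (set_pmf (map_pmf snd p)) \<le> (2 :: nat) ^ card S"
    unfolding views using len by (intro card_view_image_le[OF S]) auto
  hence "log 2 (card (set_pmf (map_pmf snd p))) \<le> card S"
    using set_pmf_not_empty fin_p
    by (subst log2_of_power_le) (auto simp: card_gt_0_iff)
  hence "pmf_entropy (map_pmf snd p) \<le> card S"
    using pmf_entropy_le_log_card[of "map_pmf snd p"] fin_p by simp
  moreover have "- log 2 (L / card (Sigma I A)) \<le> pmf_entropy p"
    using pmf_joint_msg_view_le[OF fin_I ne_I fin_A card_A c list_dec] L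
    by (intro pmf_entropy_ge_of_pmf_le[OF fin_p]) (auto simp: p_def)
  ultimately show ?thesis
    using cond_entropy_eq_entropy_diff[OF fin_p] L fin_Sigma ne_Sigma
    by (simp add: p_def log_divide card_gt_0_iff)
qed

lemma equivocation_ge:
  assumes "k \<le> n"
    and "\<And>S. S \<subseteq> {..<n} \<Longrightarrow> card S = k \<Longrightarrow> b \<le> cond_entropy (joint_msg_view I A S)"
  shows "b \<le> equivocation n k I A"
proof -
  define E where "E = {cond_entropy (joint_msg_view I A S) | S. S \<subseteq> {..<n} \<and> card S = k}"
  have "E = (\<lambda>S. cond_entropy (joint_msg_view I A S)) ` {S \<in> Pow {..<n}. card S = k}"
    by (auto simp: E_def)
  hence "finite E" by simp
  moreover have "E \<noteq> {}" using assms(1) unfolding E_def by (auto intro!: exI[of _ "{..<k}"])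
  ultimately show ?thesis
    using assms(2) unfolding equivocation_def E_def[symmetric] by (auto simp: Min_ge_iff E_def)
qed

theorem corollary4p2:
  fixes n l k :: nat and R R' rho_r L :: real
    and C :: "bool list set" and I :: "'i set" and A :: "'i \<Rightarrow> bool list set"
  assumes C_sub: "C \<subseteq> {x. length x = n}"
    and C_card: "real (card C) = 2 powr (R * real n)"
    and R'_def: "R' * real n = R * real n - real l"
    and I_card: "real (card I) = 2 powr (R' * real n)"
    and part_cover: "(\<Union>i\<in>I. A i) = C"
    and part_disj: "\<forall>i\<in>I. \<forall>j\<in>I. i \<noteq> j \<longrightarrow> A i \<inter> A j = {}"
    and part_size: "\<forall>i\<in>I. card (A i) = 2 ^ l"
    and k_def: "real k = rho_r * real n"
    and k_le: "k \<le> n"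
    and L_ge: "L \<ge> 1"
    and hyp: "\<forall>V. length V = n \<and> revealed V = k \<longrightarrow>
               (\<forall>i\<in>I. real (card {x \<in> A i. consistent x V}) < L)"
  shows "equivocation n k I A \<ge> R * real n - rho_r * real n - log 2 L"
proof (rule equivocation_ge[OF k_le])
  fix S assume S: "S \<subseteq> {..<n}" and card_S: "card S = k"
  have "real (card I) > 0" unfolding I_card by simp
  hence "card I > 0" by simp
  hence fin_I: "finite I" and ne_I: "I \<noteq> {}" by (auto simp: card_gt_0_iff)
  have fin_A: "\<forall>i\<in>I. finite (A i)" using part_size by (metis card.infinite power_not_zero zero_neq_numeral)
  have len: "\<forall>i\<in>I. \<forall>x\<in>A i. length x = n" using part_cover C_sub by blast
  have "card (Sigma I A) = card (\<Union>i\<in>I. A i)"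
    using fin_I fin_A part_disj by (simp add: card_SigmaI card_UN_disjoint)
  hence "log 2 (card (Sigma I A)) = R * real n" using C_card part_cover by simp
  moreover have "\<forall>i\<in>I. \<forall>x\<in>A i. card {y \<in> A i. consistent y (view x S)} \<le> L"
    using hyp len S card_S by (force simp: revealed_view less_imp_le)
  ultimately show "R * real n - rho_r * real n - log 2 L \<le> cond_entropy (joint_msg_view I A S)"
    using cond_entropy_joint_msg_view_ge[OF S fin_I ne_I fin_A part_size _ len, of L] L_ge
      card_S k_def by simp
qed

end
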